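(* Let $n\geq 2$, $p\geq 1$, and $$\Omega=\{(x',x_n)\in\mathbb R^{n-1}\times\mathbb R: |x'|<1,\ 0<x_n<1-|x'|^2\}.$$ Then there is a constant $C>0$ depending only on $n,p$ such that the function $$w(x',x_n)=Cx_n-Cx_n^{\frac{2}{n+p}}(1-|x'|^2)^{\frac{n+p-2}{n+p}}$$ is smooth and convex in $\Omega$ and satisfies $\det D^2 w\leq |w|^{-p}$ in $\Omega$ and $w=0$ on $\partial\Omega$. *)

theory Defs
  imports "HOL-Analysis.Analysis"
begin

text \<open>Points of R^n = R^(n-1) x R are modelled as vectors indexed by the
  finite type 'n + unit; Inl i are the first n-1 coordinates (x'),
  Inr () is the last coordinate x_n.  Hence n = CARD('n) + 1 \<ge> 2.\<close>

definition xprime :: "real ^ ('n::finite + unit) \<Rightarrow> real ^ 'n" where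
  "xprime x = (\<chi> i. x $ Inl i)"

definition xlast :: "real ^ ('n::finite + unit) \<Rightarrow> real" where
  "xlast x = x $ Inr ()"

fun Ck_on :: "nat \<Rightarrow> (real ^ 'm::finite) set \<Rightarrow> (real ^ 'm \<Rightarrow> real) \<Rightarrow> bool" where
  "Ck_on 0 S f = continuous_on S f"
| "Ck_on (Suc k) S f = (f differentiable_on S \<and>
     (\<forall>i. Ck_on k S (\<lambda>x. frechet_derivative f (at x) (axis i 1))))"

definition smooth_on :: "(real ^ 'm::finite) set \<Rightarrow> (real ^ 'm \<Rightarrow> real) \<Rightarrow> bool" where
  "smooth_on S f = (\<forall>k. Ck_on k S f)"

definition hessian :: "(real ^ 'm::finite \<Rightarrow> real) \<Rightarrow> real ^ 'm \<Rightarrow> real ^ 'm ^ 'm" where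
  "hessian f x = (\<chi> i j. frechet_derivative (\<lambda>y. frechet_derivative f (at y) (axis j 1)) (at x) (axis i 1))"

definition Omega :: "(real ^ ('n::finite + unit)) set" where
  "Omega = {x. norm (xprime x) < 1 \<and> 0 < xlast x \<and> xlast x < 1 - (norm (xprime x))\<^sup>2}"

end

theory Submission
  imports Defs
begin

text \<open>Let s = roof x = 1 - |x'|^2, a = 2/(n+p) and b = 1 - a, so that
  w = barrier C a b = C (x_n - G) with G = geo_mean a b = x_n^a s^b. As a weighted geometric mean of the positive concave functions x_n and s, G is
  concave, so w is convex; w vanishes where x_n = 0 or x_n = s. Smoothness holds because w lies in
  an algebra of functions that is closed under partial differentiation on Omega.

  Logarithmic differentiation, using a (1 - a) = b (1 - b) = a b, gives
  D^2 w = C G (2b/s P + a b V V^T), where P is the projection onto the x'-coordinates and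
  V = e_n/x_n + 2x'/s; hence det D^2 w = (2CbG/s)^(n-1) C a b G / x_n^2. The exponents are chosen
  so that G^(n+p) = x_n^2 s^(n+p-2); together with |w| <= C G this yields
  det D^2 w |w|^p <= 2^(n-1) C^(n+p) a b^n s^(p-1), which is at most 1 for C = 1/2.\<close>

section \<open>The domain and the barrier\<close>

lemma bounded_linear_xprime: "bounded_linear (xprime :: real^('n::finite+unit) \<Rightarrow> real^'n)"
proof -
  have "linear (xprime :: real^('n+unit) \<Rightarrow> real^'n)"
    by (rule linearI) (auto simp: xprime_def vec_eq_iff)
  then show ?thesis
    by (simp add: linear_conv_bounded_linear)
qed

lemma bounded_linear_xlast: "bounded_linear (xlast :: real^('n::finite+unit) \<Rightarrow> real)"
  unfolding xlast_def[abs_def] by (rule bounded_linear_vec_nth)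

lemma has_derivative_xlast: "(xlast has_derivative xlast) (at x)"
  by (rule bounded_linear.has_derivative[OF bounded_linear_xlast has_derivative_ident, simplified])

lemma xprime_scaleR_add: "xprime (u *\<^sub>R x + v *\<^sub>R y) = u *\<^sub>R xprime x + v *\<^sub>R xprime y"
  by (simp add: xprime_def vec_eq_iff)

lemma xlast_scaleR_add: "xlast (u *\<^sub>R x + v *\<^sub>R y) = u * xlast x + v * xlast y"
  by (simp add: xlast_def)

lemma xlast_axis: "xlast (axis j 1 :: real^('n::finite+unit)) = (if j = Inr () then 1 else 0)"
  by (simp add: xlast_def axis_def)

lemma xprime_axis_Inl: "xprime (axis (Inl i) 1 :: real^('n::finite+unit)) = axis i 1"
  by (simp add: xprime_def axis_def vec_eq_iff)

lemma xprime_axis_Inr: "xprime (axis (Inr u) 1 :: real^('n::finite+unit)) = 0"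
  by (simp add: xprime_def axis_def vec_eq_iff)

lemma inner_xprime_axis:
  "xprime x \<bullet> xprime (axis j 1 :: real^('n::finite+unit)) = (case j of Inl i \<Rightarrow> x $ Inl i | Inr _ \<Rightarrow> 0)"
  by (cases j) (simp_all add: xprime_axis_Inl xprime_axis_Inr inner_axis, simp add: xprime_def)

lemma inner_xprime_axis_axis:
  "xprime (axis i 1 :: real^('n::finite+unit)) \<bullet> xprime (axis j 1) = (if i = j \<and> i \<noteq> Inr () then 1 else 0)"
  by (cases i; cases j) (auto simp: xprime_axis_Inl xprime_axis_Inr inner_axis_axis)

definition roof :: "real^('n::finite+unit) \<Rightarrow> real" where
  "roof x = 1 - (norm (xprime x))\<^sup>2"

lemma has_derivative_roof:
  "(roof has_derivative (\<lambda>h. -2 * (xprime x \<bullet> xprime h))) (at (x::real^('n::finite+unit)))"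
proof -
  have roof_eq: "roof = (\<lambda>x::real^('n+unit). 1 - xprime x \<bullet> xprime x)"
    by (auto simp: roof_def power2_norm_eq_inner)
  show ?thesis
    unfolding roof_eq
    by (auto intro!: derivative_eq_intros bounded_linear.has_derivative[OF bounded_linear_xprime]
        simp: inner_commute)
qed

lemma continuous_on_roof: "continuous_on S (roof :: real^('n::finite+unit) \<Rightarrow> real)"
  unfolding roof_def[abs_def]
  by (intro continuous_intros linear_continuous_on bounded_linear_xprime)

lemma norm_power2_convex_combination:
  fixes A B :: "'a::real_inner"
  assumes "u + v = 1"
  shows "u * (norm A)\<^sup>2 + v * (norm B)\<^sup>2 - (norm (u *\<^sub>R A + v *\<^sub>R B))\<^sup>2 = u * v * (norm (A - B))\<^sup>2"
proof -
  have v: "v = 1 - u"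
    using assms by simp
  show ?thesis
    unfolding v power2_norm_eq_inner
    by (simp add: inner_add_left inner_add_right inner_diff_left inner_diff_right inner_commute
        algebra_simps)
qed

lemma roof_concave:
  assumes "0 \<le> u" "0 \<le> v" "u + v = 1"
  shows "u * roof x + v * roof y \<le> roof (u *\<^sub>R x + v *\<^sub>R y)"
  using norm_power2_convex_combination[OF assms(3), of "xprime x" "xprime y"] assms
  by (simp add: roof_def xprime_scaleR_add algebra_simps)

lemma Omega_eq: "Omega = {x. 0 < xlast x \<and> xlast x < roof x}"
proof -
  have "norm (xprime x) < 1" if "xlast x < roof x" "0 < xlast x" for x :: "real^('n::finite+unit)"
  proof (rule power_less_imp_less_base)
    show "(norm (xprime x))\<^sup>2 < 1\<^sup>2"
      using that by (simp add: roof_def)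
  qed simp
  then show ?thesis
    by (auto simp: Omega_def roof_def)
qed

lemma roof_pos: "x \<in> Omega \<Longrightarrow> 0 < roof x"
  by (simp add: Omega_eq)

lemma roof_le_1: "roof x \<le> 1"
  by (simp add: roof_def)

lemma open_Omega: "open Omega"
  unfolding Omega_eq
  by (intro open_Collect_conj open_Collect_less continuous_on_roof continuous_on_const
      linear_continuous_on bounded_linear_xlast)

lemma convex_combination_pos:
  fixes x y u v :: real
  assumes "0 < x" "0 < y" "0 \<le> u" "0 \<le> v" "u + v = 1"
  shows "0 < u * x + v * y"
proof (cases "u = 0")
  case False
  then have "0 < u * x"
    using assms by simp
  moreover have "0 \<le> v * y"
    using assms by simp
  ultimately show ?thesis
    by linarith
qed (use assms in simp)

lemma convex_Omega: "convex Omega"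
proof (rule convexI)
  fix x y :: "real^('n::finite+unit)" and u v :: real
  assume "x \<in> Omega" "y \<in> Omega" and uv: "0 \<le> u" "0 \<le> v" "u + v = 1"
  then have "0 < xlast x" "0 < roof x - xlast x" "0 < xlast y" "0 < roof y - xlast y"
    by (auto simp: Omega_eq)
  then have "0 < u * xlast x + v * xlast y" "0 < u * (roof x - xlast x) + v * (roof y - xlast y)"
    using uv by (simp_all add: convex_combination_pos)
  then show "u *\<^sub>R x + v *\<^sub>R y \<in> Omega"
    using roof_concave[OF uv, of x y] by (simp add: Omega_eq xlast_scaleR_add algebra_simps)
qed

lemma frontier_Omega:
  assumes "x \<in> frontier Omega"
  shows "xlast x = 0 \<or> xlast x = roof x" "0 \<le> xlast x"
proof -
  have "closed {x::real^('n::finite+unit). 0 \<le> xlast x \<and> xlast x \<le> roof x}"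
    by (intro closed_Collect_conj closed_Collect_le continuous_on_roof continuous_on_const
        linear_continuous_on bounded_linear_xlast)
  then have "closure Omega \<subseteq> {x. 0 \<le> xlast x \<and> xlast x \<le> roof x}"
    by (intro closure_minimal) (auto simp: Omega_eq)
  moreover have "x \<in> closure Omega" "x \<notin> Omega"
    using assms by (auto simp: frontier_def interior_open[OF open_Omega])
  ultimately show "xlast x = 0 \<or> xlast x = roof x" "0 \<le> xlast x"
    by (auto simp: Omega_eq)
qed

definition geo_mean :: "real \<Rightarrow> real \<Rightarrow> real^('n::finite+unit) \<Rightarrow> real" where
  "geo_mean a b x = xlast x powr a * roof x powr b"

definition barrier :: "real \<Rightarrow> real \<Rightarrow> real \<Rightarrow> real^('n::finite+unit) \<Rightarrow> real" where
  "barrier C a b x = C * (xlast x - geo_mean a b x)"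

section \<open>Smoothness\<close>

lemma Ck_on_cong:
  assumes "open S" "\<And>x. x \<in> S \<Longrightarrow> f x = g x"
  shows "Ck_on k S f = Ck_on k S g"
  using assms(2)
proof (induction k arbitrary: f g)
  case 0
  then show ?case
    unfolding Ck_on.simps by (intro continuous_on_cong refl) simp
next
  case (Suc k)
  have has_derivative_iff: "(f has_derivative D) (at x) \<longleftrightarrow> (g has_derivative D) (at x)"
    if "x \<in> S" for x D
  proof
    show "(g has_derivative D) (at x)" if "(f has_derivative D) (at x)"
      using that by (rule has_derivative_transform_within_open[OF _ assms(1) \<open>x \<in> S\<close>])
        (simp add: Suc.prems)
    show "(f has_derivative D) (at x)" if "(g has_derivative D) (at x)"
      using that by (rule has_derivative_transform_within_open[OF _ assms(1) \<open>x \<in> S\<close>])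
        (simp add: Suc.prems)
  qed
  have "frechet_derivative f (at x) = frechet_derivative g (at x)" if "x \<in> S" for x
    unfolding frechet_derivative_def using has_derivative_iff[OF that] by simp
  then have "Ck_on k S (\<lambda>x. frechet_derivative f (at x) (axis i 1))
      = Ck_on k S (\<lambda>x. frechet_derivative g (at x) (axis i 1))" for i
    by (intro Suc.IH) simp
  moreover have "f differentiable_on S \<longleftrightarrow> g differentiable_on S"
    unfolding differentiable_on_def differentiable_def
    using has_derivative_iff by (simp add: at_within_open[OF _ assms(1)])
  ultimately show ?case
    by simp
qed

definition has_partials_in :: "(real^'m::finite \<Rightarrow> real) set \<Rightarrow> (real^'m) set \<Rightarrow> (real^'m \<Rightarrow> real) \<Rightarrow> bool"
  where "has_partials_in F S f \<longleftrightarrow> (\<exists>D. (\<forall>x\<in>S. (f has_derivative D x) (at x))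
    \<and> (\<forall>i. \<exists>g\<in>F. \<forall>x\<in>S. D x (axis i 1) = g x))"

lemma smooth_on_if_closed_under_partials:
  assumes "open S" and partials: "\<And>f. f \<in> F \<Longrightarrow> has_partials_in F S f" and "f \<in> F"
  shows "smooth_on S f"
  unfolding smooth_on_def
proof
  fix k
  show "Ck_on k S f"
    using \<open>f \<in> F\<close>
  proof (induction k arbitrary: f)
    case 0
    then have "f differentiable_on S"
      using partials unfolding has_partials_in_def
      by (metis differentiable_at_imp_differentiable_on differentiable_def)
    then show ?case
      by (simp add: differentiable_imp_continuous_on)
  next
    case (Suc k)
    obtain D where D: "\<forall>x\<in>S. (f has_derivative D x) (at x)"
        "\<forall>i. \<exists>g\<in>F. \<forall>x\<in>S. D x (axis i 1) = g x"
      using partials[OF Suc.prems] unfolding has_partials_in_def by blast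
    have "Ck_on k S (\<lambda>x. frechet_derivative f (at x) (axis i 1))" for i
    proof -
      obtain g where "g \<in> F" "\<forall>x\<in>S. frechet_derivative f (at x) (axis i 1) = g x"
        using D by (metis frechet_derivative_at)
      then show ?thesis
        using Suc.IH[of g] Ck_on_cong[OF \<open>open S\<close>, of g "\<lambda>x. frechet_derivative f (at x) (axis i 1)" k]
        by simp
    qed
    moreover have "f differentiable_on S"
      using D(1) by (metis differentiable_at_imp_differentiable_on differentiable_def)
    ultimately show ?case
      by simp
  qed
qed

lemma has_partials_in_add:
  assumes "has_partials_in F S f" "has_partials_in F S g"
    and closed: "\<And>f g. f \<in> F \<Longrightarrow> g \<in> F \<Longrightarrow> (\<lambda>x. f x + g x) \<in> F"
  shows "has_partials_in F S (\<lambda>x. f x + g x)"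
proof -
  obtain Df Dg f' g' where "\<forall>x\<in>S. (f has_derivative Df x) (at x)" "\<forall>x\<in>S. (g has_derivative Dg x) (at x)"
    and "\<And>i. f' i \<in> F \<and> (\<forall>x\<in>S. Df x (axis i 1) = f' i x)"
    and "\<And>i. g' i \<in> F \<and> (\<forall>x\<in>S. Dg x (axis i 1) = g' i x)"
    using assms(1,2) unfolding has_partials_in_def by metis
  then show ?thesis
    unfolding has_partials_in_def
    by (intro exI[of _ "\<lambda>x h. Df x h + Dg x h"] conjI allI)
      (auto intro!: has_derivative_add bexI[OF _ closed])
qed

lemma has_partials_in_mult:
  assumes "has_partials_in F S f" "has_partials_in F S g" "f \<in> F" "g \<in> F"
    and closed: "\<And>f g. f \<in> F \<Longrightarrow> g \<in> F \<Longrightarrow> (\<lambda>x. f x + g x) \<in> F"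
      "\<And>f g. f \<in> F \<Longrightarrow> g \<in> F \<Longrightarrow> (\<lambda>x. f x * g x) \<in> F"
  shows "has_partials_in F S (\<lambda>x. f x * g x)"
proof -
  obtain Df Dg f' g' where "\<forall>x\<in>S. (f has_derivative Df x) (at x)" "\<forall>x\<in>S. (g has_derivative Dg x) (at x)"
    and "\<And>i. f' i \<in> F \<and> (\<forall>x\<in>S. Df x (axis i 1) = f' i x)"
    and "\<And>i. g' i \<in> F \<and> (\<forall>x\<in>S. Dg x (axis i 1) = g' i x)"
    using assms(1,2) unfolding has_partials_in_def by metis
  then show ?thesis
    unfolding has_partials_in_def using assms(3,4)
    by (intro exI[of _ "\<lambda>x h. f x * Dg x h + Df x h * g x"] conjI allI)
      (auto intro!: has_derivative_mult bexI[OF _ closed(1)[OF closed(2) closed(2)]])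
qed

lemma has_derivative_powr_const:
  fixes g :: "'a::real_normed_vector \<Rightarrow> real"
  assumes "(g has_derivative g') (at x)" "0 < g x"
  shows "((\<lambda>x. g x powr r) has_derivative (\<lambda>h. r * g x powr (r - 1) * g' h)) (at x)"
proof -
  have "((\<lambda>x. g x powr r) has_derivative (\<lambda>h. g x powr r * (0 * ln (g x) + g' h * r / g x))) (at x)"
    using has_derivative_powr[OF assms(1) has_derivative_const, of r] assms(2) by auto
  then show ?thesis
    by (rule has_derivative_eq_rhs) (use assms(2) in \<open>auto simp: powr_diff field_simps fun_eq_iff\<close>)
qed

inductive_set Omega_algebra :: "(real^('n::finite+unit) \<Rightarrow> real) set" where
  const: "(\<lambda>x. c) \<in> Omega_algebra"
| coordinate: "(\<lambda>x. x $ k) \<in> Omega_algebra"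
| xlast_powr: "(\<lambda>x. xlast x powr r) \<in> Omega_algebra"
| roof_powr: "(\<lambda>x. roof x powr r) \<in> Omega_algebra"
| add: "f \<in> Omega_algebra \<Longrightarrow> g \<in> Omega_algebra \<Longrightarrow> (\<lambda>x. f x + g x) \<in> Omega_algebra"
| mult: "f \<in> Omega_algebra \<Longrightarrow> g \<in> Omega_algebra \<Longrightarrow> (\<lambda>x. f x * g x) \<in> Omega_algebra"

lemma has_partials_in_xlast_powr: "has_partials_in Omega_algebra Omega (\<lambda>x. xlast x powr r)"
proof -
  let ?D = "\<lambda>x h. r * xlast x powr (r - 1) * xlast h"
  have "\<exists>g\<in>Omega_algebra. \<forall>x\<in>Omega. ?D x (axis i 1 :: real^('n::finite+unit)) = g x" for i
    by (rule bexI[of _ "\<lambda>x. r * xlast x powr (r - 1) * xlast (axis i 1 :: real^('n+unit))"])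
      (simp_all add: Omega_algebra.intros)
  moreover have "((\<lambda>x. xlast x powr r) has_derivative ?D x) (at x)" if "x \<in> Omega" for x
    using that by (intro has_derivative_powr_const has_derivative_xlast) (simp add: Omega_eq)
  ultimately show ?thesis
    unfolding has_partials_in_def by (intro exI[of _ ?D]) blast
qed

lemma has_partials_in_roof_powr: "has_partials_in Omega_algebra Omega (\<lambda>x. roof x powr r)"
proof -
  let ?D = "\<lambda>x h. r * roof x powr (r - 1) * (-2 * (xprime x \<bullet> xprime h))"
  have "\<exists>g\<in>Omega_algebra. \<forall>x\<in>Omega. ?D x (axis i 1 :: real^('n::finite+unit)) = g x" for i
  proof (cases i)
    case (Inl l)
    show ?thesis
      by (rule bexI[of _ "\<lambda>x. (-2 * r) * roof x powr (r - 1) * x $ Inl l"])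
        (simp add: Inl inner_xprime_axis, intro Omega_algebra.intros)
  next
    case (Inr u)
    show ?thesis
      by (rule bexI[of _ "\<lambda>x. 0"]) (simp_all add: Inr xprime_axis_Inr Omega_algebra.const)
  qed
  moreover have "((\<lambda>x. roof x powr r) has_derivative ?D x) (at x)" if "x \<in> Omega" for x
    using that by (intro has_derivative_powr_const has_derivative_roof) (simp add: roof_pos)
  ultimately show ?thesis
    unfolding has_partials_in_def by (intro exI[of _ ?D]) blast
qed

lemma has_partials_in_Omega_algebra:
  assumes "f \<in> Omega_algebra"
  shows "has_partials_in Omega_algebra Omega f"
  using assms
proof induction
  case (const c)
  show ?case
    unfolding has_partials_in_def
    by (rule exI[of _ "\<lambda>x h. 0"]) (auto intro: Omega_algebra.const)
next
  case (coordinate k)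
  show ?case
    unfolding has_partials_in_def
    by (rule exI[of _ "\<lambda>x h. h $ k"])
      (auto intro: Omega_algebra.const bounded_linear.has_derivative[OF bounded_linear_vec_nth])
next
  case (add f g)
  then show ?case
    by (intro has_partials_in_add Omega_algebra.add)
next
  case (mult f g)
  then show ?case
    by (intro has_partials_in_mult Omega_algebra.add Omega_algebra.mult)
qed (rule has_partials_in_xlast_powr has_partials_in_roof_powr)+

lemma smooth_on_Omega_algebra: "f \<in> Omega_algebra \<Longrightarrow> smooth_on Omega f"
  by (rule smooth_on_if_closed_under_partials[OF open_Omega has_partials_in_Omega_algebra])

lemma barrier_in_Omega_algebra: "barrier C a b \<in> Omega_algebra"
proof -
  have "barrier C a b = (\<lambda>x. C * x $ Inr () + (- C) * (xlast x powr a * roof x powr b))"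
    by (simp add: fun_eq_iff barrier_def geo_mean_def xlast_def algebra_simps)
  also have "\<dots> \<in> Omega_algebra"
    by (intro Omega_algebra.intros)
  finally show ?thesis .
qed

section \<open>Convexity and boundary values\<close>

lemma weighted_geometric_mean_concave:
  fixes a b t1 t2 s1 s2 u v :: real
  assumes ab: "0 \<le> a" "0 \<le> b" "a + b = 1"
    and pos: "0 < t1" "0 < t2" "0 < s1" "0 < s2"
    and uv: "0 \<le> u" "0 \<le> v" "u + v = 1"
  shows "u * (t1 powr a * s1 powr b) + v * (t2 powr a * s2 powr b)
    \<le> (u * t1 + v * t2) powr a * (u * s1 + v * s2) powr b"
proof -
  define T S where "T = u * t1 + v * t2" and "S = u * s1 + v * s2"
  have "0 < T" "0 < S"
    unfolding T_def S_def using pos uv by (simp_all add: convex_combination_pos)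
  have young: "t powr a * s powr b \<le> (a * (t / T) + b * (s / S)) * (T powr a * S powr b)"
    if "0 < t" "0 < s" for t s
  proof -
    have "(t / T) powr a * (s / S) powr b \<le> a * (t / T) + b * (s / S)"
      using Youngs_inequality_0[of a b "t / T" "s / S"] ab that \<open>0 < T\<close> \<open>0 < S\<close> by simp
    then show ?thesis
      using \<open>0 < T\<close> \<open>0 < S\<close> that
      by (simp add: powr_divide divide_simps mult_ac split: if_splits)
  qed
  have "u * (t1 powr a * s1 powr b) + v * (t2 powr a * s2 powr b)
      \<le> (a * ((u * t1 + v * t2) / T) + b * ((u * s1 + v * s2) / S)) * (T powr a * S powr b)"
    using mult_left_mono[OF young[OF pos(1,3)] uv(1)] mult_left_mono[OF young[OF pos(2,4)] uv(2)]
    by (simp add: add_divide_distrib algebra_simps)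
  also have "\<dots> = T powr a * S powr b"
    using \<open>0 < T\<close> \<open>0 < S\<close> ab by (simp add: T_def S_def)
  finally show ?thesis
    by (simp add: T_def S_def)
qed

lemma concave_on_geo_mean:
  assumes "0 \<le> a" "0 \<le> b" "a + b = 1"
  shows "concave_on Omega (geo_mean a b)"
  unfolding concave_on_iff
proof (intro conjI convex_Omega ballI allI impI)
  fix x y :: "real^('n::finite+unit)" and u v :: real
  assume "x \<in> Omega" "y \<in> Omega" and uv: "0 \<le> u" "0 \<le> v" "u + v = 1"
  then have pos: "0 < xlast x" "0 < xlast y" "0 < roof x" "0 < roof y"
    by (auto simp: Omega_eq)
  have "u * geo_mean a b x + v * geo_mean a b y
      \<le> (u * xlast x + v * xlast y) powr a * (u * roof x + v * roof y) powr b"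
    unfolding geo_mean_def by (rule weighted_geometric_mean_concave[OF assms pos uv])
  also have "\<dots> \<le> xlast (u *\<^sub>R x + v *\<^sub>R y) powr a * roof (u *\<^sub>R x + v *\<^sub>R y) powr b"
    using roof_concave[OF uv] pos uv assms
    by (auto simp: xlast_scaleR_add convex_combination_pos intro!: mult_left_mono powr_mono2)
  finally show "u * geo_mean a b x + v * geo_mean a b y \<le> geo_mean a b (u *\<^sub>R x + v *\<^sub>R y)"
    by (simp add: geo_mean_def)
qed

lemma convex_on_barrier:
  assumes "0 \<le> C" "0 \<le> a" "0 \<le> b" "a + b = 1"
  shows "convex_on Omega (barrier C a b)"
proof -
  have "convex_on Omega xlast"
    by (simp add: convex_on_def convex_Omega xlast_scaleR_add)
  then have "convex_on Omega (\<lambda>x. xlast x - geo_mean a b x)"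
    using concave_on_geo_mean[OF assms(2-4)] by (rule convex_on_diff)
  then show ?thesis
    unfolding barrier_def[abs_def] by (rule convex_on_cmul[OF assms(1)])
qed

lemma barrier_frontier:
  assumes "x \<in> frontier Omega" "a + b = 1"
  shows "barrier C a b x = 0"
  using frontier_Omega[OF assms(1)]
proof (elim disjE)
  assume "xlast x = roof x" "0 \<le> xlast x"
  then show ?thesis
    using assms(2) by (simp add: barrier_def geo_mean_def flip: powr_add)
qed (simp add: barrier_def geo_mean_def)

section \<open>The Hessian determinant\<close>

lemma det_identity_row_replaced:
  fixes V :: "'a::finite \<Rightarrow> 'b::field" and k :: 'a
  shows "det (\<chi> r i. if r = k then V i else if r = i then 1 else 0 :: 'b^'a^'a) = V k"
proof -
  define E0 :: "'b^'a^'a" where "E0 = (\<chi> r i. if r = i then (if r = k then V k else 1) else 0)"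
  let ?z = "\<Sum>j\<in>UNIV - {k}. V j *s row j E0"
  have "?z \<in> vec.span {row j E0 | j. j \<noteq> k}"
    by (force intro: vec.span_sum vec.span_scale vec.span_base)
  from det_row_span[OF this]
  have "det (\<chi> r. if r = k then row k E0 + ?z else row r E0) = V k"
    by (simp add: E0_def det_diagonal prod.remove[of UNIV k])
  moreover have "(\<chi> r. if r = k then row k E0 + ?z else row r E0)
      = (\<chi> r i. if r = k then V i else if r = i then 1 else 0)"
  proof -
    have "?z $ i = (\<Sum>j\<in>UNIV - {k}. if j = i then V j else 0)" for i
      unfolding sum_component by (rule sum.cong) (auto simp: row_def E0_def)
    then have "?z $ i = (if i = k then 0 else V i)" for i
      by (simp add: sum.delta')
    then show ?thesis
      by (simp add: vec_eq_iff row_def E0_def)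
  qed
  ultimately show ?thesis
    by simp
qed

lemma det_projection_plus_rank_one:
  fixes V :: "'a::finite \<Rightarrow> 'b::field" and k :: 'a
  shows "det (\<chi> i j. \<alpha> * (if i = j \<and> i \<noteq> k then 1 else 0) + \<delta> * V i * V j :: 'b^'a^'a)
    = \<alpha> ^ (CARD('a) - 1) * \<delta> * (V k)\<^sup>2"
proof -
  define d where "d r = (if r = k then \<delta> else \<alpha>)" for r
  define D :: "'b^'a^'a" where "D = (\<chi> i j. if i = j then d i else 0)"
  define E :: "'b^'a^'a" where "E = (\<chi> r i. if r = k then V i else if r = i then 1 else 0)"
  have "(\<Sum>r\<in>UNIV - {k}. E $ r $ i * (d r * E $ r $ j)) = \<alpha> * (if i = j \<and> i \<noteq> k then 1 else 0)"
    for i j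
  proof -
    have "(\<Sum>r\<in>UNIV - {k}. E $ r $ i * (d r * E $ r $ j))
        = (\<Sum>r\<in>UNIV - {k}. if r = i then (if r = j then \<alpha> else 0) else 0)"
      by (rule sum.cong) (auto simp: E_def d_def)
    then show ?thesis
      by (simp add: sum.delta')
  qed
  moreover have "D ** E = (\<chi> r j. d r * E $ r $ j)"
  proof -
    have "(\<Sum>r\<in>UNIV. (if i = r then d i else 0) * E $ r $ j)
        = (\<Sum>r\<in>UNIV. if i = r then d i * E $ r $ j else 0)" for i j
      by (rule sum.cong) auto
    then show ?thesis
      by (simp add: D_def matrix_matrix_mult_def vec_eq_iff)
  qed
  ultimately have factorization:
    "transpose E ** (D ** E) = (\<chi> i j. \<alpha> * (if i = j \<and> i \<noteq> k then 1 else 0) + \<delta> * V i * V j)"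
    by (simp add: matrix_matrix_mult_def vec_eq_iff transpose_def sum.remove[of UNIV k])
      (simp add: E_def d_def algebra_simps)
  have "det D = \<alpha> ^ (CARD('a) - 1) * \<delta>"
    by (simp add: D_def det_diagonal prod.remove[of UNIV k] d_def card_Diff_singleton mult.commute)
  then show ?thesis
    unfolding factorization[symmetric] det_mul det_transpose
    by (simp add: E_def det_identity_row_replaced power2_eq_square)
qed

lemma has_derivative_geo_mean:
  assumes "x \<in> Omega"
  shows "(geo_mean a b has_derivative
      (\<lambda>h. geo_mean a b x * (a * xlast h / xlast x - 2 * b * (xprime x \<bullet> xprime h) / roof x))) (at x)"
proof -
  have pos: "0 < xlast x" "0 < roof x"
    using assms by (simp_all add: Omega_eq)
  have "((\<lambda>x. xlast x powr a * roof x powr b) has_derivative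
      (\<lambda>h. xlast x powr a * (b * roof x powr (b - 1) * (-2 * (xprime x \<bullet> xprime h)))
         + a * xlast x powr (a - 1) * xlast h * roof x powr b)) (at x)"
    using pos by (intro has_derivative_mult has_derivative_powr_const has_derivative_xlast
        has_derivative_roof)
  then show ?thesis
    unfolding geo_mean_def[abs_def]
    by (rule has_derivative_eq_rhs) (use pos in \<open>simp add: fun_eq_iff powr_diff field_simps\<close>)
qed

lemma frechet_derivative_barrier:
  assumes "x \<in> Omega"
  shows "frechet_derivative (barrier C a b) (at x) e
    = C * (xlast e - geo_mean a b x * (a * xlast e / xlast x - 2 * b * (xprime x \<bullet> xprime e) / roof x))"
proof -
  have "(barrier C a b has_derivative (\<lambda>h. C * (xlast h - geo_mean a b x *
      (a * xlast h / xlast x - 2 * b * (xprime x \<bullet> xprime h) / roof x)))) (at x)"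
    unfolding barrier_def[abs_def]
    by (intro has_derivative_mult_right has_derivative_diff has_derivative_xlast
        has_derivative_geo_mean assms)
  then show ?thesis
    by (simp add: frechet_derivative_at[symmetric])
qed

lemma has_derivative_frechet_derivative_barrier:
  assumes "x \<in> Omega" "a + b = 1"
  shows "((\<lambda>y. frechet_derivative (barrier C a b) (at y) e) has_derivative
      (\<lambda>h. C * geo_mean a b x *
        (a * b * (xlast h / xlast x + 2 * (xprime x \<bullet> xprime h) / roof x)
               * (xlast e / xlast x + 2 * (xprime x \<bullet> xprime e) / roof x)
         + 2 * b * (xprime h \<bullet> xprime e) / roof x))) (at x)"
proof -
  have pos: "0 < xlast x" "0 < roof x"
    using assms by (simp_all add: Omega_eq)
  have nonzero: "xlast x \<noteq> 0" "roof x \<noteq> 0"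
    using pos by simp_all
  have a: "a = 1 - b"
    using assms(2) by simp
  have inner_e: "((\<lambda>y. xprime y \<bullet> xprime e) has_derivative (\<lambda>h. xprime h \<bullet> xprime e)) (at x)"
    by (intro bounded_linear.has_derivative[OF bounded_linear_compose[OF
          bounded_linear_inner_left bounded_linear_xprime] has_derivative_ident])
  have "((\<lambda>y. C * (xlast e - geo_mean a b y * (a * xlast e / xlast y - 2 * b * (xprime y \<bullet> xprime e) / roof y)))
      has_derivative (\<lambda>h. C * geo_mean a b x *
        (a * b * (xlast h / xlast x + 2 * (xprime x \<bullet> xprime h) / roof x)
               * (xlast e / xlast x + 2 * (xprime x \<bullet> xprime e) / roof x)
         + 2 * b * (xprime h \<bullet> xprime e) / roof x))) (at x)"
    by (rule has_derivative_eq_rhs, (rule inner_e has_derivative_geo_mean[OF assms(1)]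
          has_derivative_xlast has_derivative_roof nonzero derivative_eq_intros refl)+)
      (use pos in \<open>simp add: fun_eq_iff field_simps a power2_eq_square\<close>)
  then show ?thesis
    by (rule has_derivative_transform_within_open[OF _ open_Omega assms(1)])
      (simp add: frechet_derivative_barrier)
qed

lemma det_hessian_barrier:
  fixes x :: "real^('n::finite+unit)"
  assumes "x \<in> Omega" "a + b = 1"
  shows "det (hessian (barrier C a b) x)
    = (2 * C * b * geo_mean a b x / roof x) ^ CARD('n) * (C * a * b * geo_mean a b x) / (xlast x)\<^sup>2"
proof -
  define V where "V i = xlast (axis i 1 :: real^('n+unit)) / xlast x
      + 2 * (xprime x \<bullet> xprime (axis i 1 :: real^('n+unit))) / roof x" for i
  have hessian_eq: "hessian (barrier C a b) x = (\<chi> i j. (2 * C * b * geo_mean a b x / roof x)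
      * (if i = j \<and> i \<noteq> Inr () then 1 else 0) + (C * a * b * geo_mean a b x) * V i * V j)"
    unfolding hessian_def vec_eq_iff
      has_derivative_frechet_derivative_barrier[OF assms, THEN frechet_derivative_at, symmetric]
    using assms(1) by (simp add: V_def inner_xprime_axis_axis Omega_eq field_simps)
  have "V (Inr ()) = 1 / xlast x"
    by (simp add: V_def xlast_axis xprime_axis_Inr)
  then show ?thesis
    unfolding hessian_eq det_projection_plus_rank_one by (simp add: power_divide)
qed

lemma xlast_less_geo_mean:
  assumes "x \<in> Omega" "a + b = 1" "0 < b"
  shows "xlast x < geo_mean a b x"
proof -
  have "0 < xlast x" "xlast x < roof x"
    using assms(1) by (simp_all add: Omega_eq)
  then have "xlast x powr a * xlast x powr b < xlast x powr a * roof x powr b"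
    using assms(3) by (simp add: powr_less_mono2)
  then show ?thesis
    using assms(2) \<open>0 < xlast x\<close> by (simp add: geo_mean_def flip: powr_add)
qed

lemma geo_mean_powr:
  assumes "x \<in> Omega" "0 < q"
  shows "geo_mean (2/q) ((q - 2)/q) x powr q = (xlast x)\<^sup>2 * roof x powr (q - 2)"
  using assms by (simp add: geo_mean_def Omega_eq powr_mult powr_powr powr_numeral)

lemma det_hessian_estimate:
  fixes t s G a b p q :: real and m :: nat
  assumes "0 < t" "t < G" "0 < s" "s \<le> 1" "1 \<le> p"
    and "0 < a" "a \<le> 1" "0 < b" "b \<le> 1"
    and q: "q = real m + 1 + p" and G_power: "G powr q = t\<^sup>2 * s powr (q - 2)"
  shows "(b * G / s) ^ m * (a * b * G / 2) / t\<^sup>2 \<le> ((G - t) / 2) powr (- p)"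
proof -
  have "0 < G"
    using assms by simp
  have "G ^ m * G * G powr p = G powr q"
    using \<open>0 < G\<close> by (simp add: q powr_add powr_realpow)
  also have "\<dots> = t\<^sup>2 * s powr (real m + (p - 1))"
    using G_power q by (simp add: add_diff_eq)
  also have "\<dots> = t\<^sup>2 * s ^ m * s powr (p - 1)"
    using \<open>0 < s\<close> by (simp add: powr_add powr_realpow)
  finally have "(b * G / s) ^ m * (a * b * G / 2) / t\<^sup>2 * (G / 2) powr p
      = b ^ m * (a * b) * s powr (p - 1) / (2 * 2 powr p)"
    using \<open>0 < G\<close> \<open>0 < s\<close> \<open>0 < t\<close>
    by (simp add: powr_divide power_divide power_mult_distrib field_simps)
  also have "\<dots> \<le> 1"
  proof -
    have "b ^ m * (a * b) * s powr (p - 1) \<le> 1 * 1 * 1"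
      using assms by (intro mult_mono power_le_one mult_le_one powr_le1) auto
    moreover have "1 \<le> 2 * 2 powr p"
      using ge_one_powr_ge_zero[of 2 p] assms(5) by simp
    ultimately show ?thesis
      by simp
  qed
  finally have "(b * G / s) ^ m * (a * b * G / 2) / t\<^sup>2 \<le> (G / 2) powr (- p)"
    using \<open>0 < G\<close> by (simp add: powr_minus field_simps)
  also have "\<dots> \<le> ((G - t) / 2) powr (- p)"
    using assms by (intro powr_mono2') auto
  finally show ?thesis .
qed

lemma det_hessian_barrier_le:
  fixes x :: "real^('n::finite+unit)"
  assumes "x \<in> Omega" "1 \<le> p"
  defines "q \<equiv> real (CARD('n) + 1) + p"
  shows "det (hessian (barrier (1/2) (2/q) ((q - 2)/q)) x)
    \<le> \<bar>barrier (1/2) (2/q) ((q - 2)/q) x\<bar> powr (- p)"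
proof -
  define a b G where "a = 2/q" and "b = (q - 2)/q" and "G = geo_mean a b x"
  have "1 \<le> real CARD('n)"
    by (simp add: Suc_leI)
  then have "3 \<le> q"
    using assms(2) unfolding q_def of_nat_add of_nat_1 by linarith
  then have ab: "a + b = 1" "0 < a" "a \<le> 1" "0 < b" "b \<le> 1"
    by (auto simp: a_def b_def field_simps)
  have "xlast x < G"
    unfolding G_def using xlast_less_geo_mean[OF assms(1) ab(1,4)] .
  moreover have "G powr q = (xlast x)\<^sup>2 * roof x powr (q - 2)"
    using geo_mean_powr[OF assms(1)] \<open>3 \<le> q\<close> by (simp add: G_def a_def b_def)
  ultimately have "(b * G / roof x) ^ CARD('n) * (a * b * G / 2) / (xlast x)\<^sup>2
      \<le> ((G - xlast x) / 2) powr (- p)"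
    using assms ab by (intro det_hessian_estimate[where q = q])
      (simp_all add: Omega_eq roof_le_1 q_def)
  moreover have "det (hessian (barrier (1/2) a b) x)
      = (b * G / roof x) ^ CARD('n) * (a * b * G / 2) / (xlast x)\<^sup>2"
    using det_hessian_barrier[OF assms(1) ab(1), of "1/2"] by (simp add: G_def)
  moreover have "\<bar>barrier (1/2) a b x\<bar> = (G - xlast x) / 2"
    using \<open>xlast x < G\<close> by (simp add: barrier_def G_def)
  ultimately have "det (hessian (barrier (1/2) a b) x) \<le> \<bar>barrier (1/2) a b x\<bar> powr (- p)"
    by (simp only:)
  then show ?thesis
    by (simp only: a_def b_def)
qed

theorem lemma2p4:
  fixes p :: real
  assumes "p \<ge> 1"
  shows "\<exists>C>0. let n = real (CARD('n::finite) + 1);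
             w = (\<lambda>x::real ^ ('n + unit). C * xlast x
                    - C * (xlast x) powr (2 / (n + p))
                        * (1 - (norm (xprime x))\<^sup>2) powr ((n + p - 2) / (n + p)))
           in smooth_on (Omega :: (real ^ ('n + unit)) set) w
            \<and> convex_on (Omega :: (real ^ ('n + unit)) set) w
            \<and> (\<forall>x\<in>(Omega :: (real ^ ('n + unit)) set). det (hessian w x) \<le> \<bar>w x\<bar> powr (- p))
            \<and> (\<forall>x\<in>frontier (Omega :: (real ^ ('n + unit)) set). w x = 0)"
proof -
  define q where "q = real (CARD('n) + 1) + p"
  define w :: "real^('n+unit) \<Rightarrow> real" where "w = barrier (1/2) (2/q) ((q - 2)/q)"
  have "2 \<le> q"
    using assms by (simp add: q_def)
  then have ab: "0 \<le> 2/q" "0 \<le> (q - 2)/q" "2/q + (q - 2)/q = 1"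
    by (simp_all add: field_simps)
  have "smooth_on Omega w"
    unfolding w_def by (rule smooth_on_Omega_algebra[OF barrier_in_Omega_algebra])
  moreover have "convex_on Omega w"
    unfolding w_def using ab by (intro convex_on_barrier) simp_all
  moreover have "\<forall>x\<in>Omega. det (hessian w x) \<le> \<bar>w x\<bar> powr (- p)"
    unfolding w_def q_def using det_hessian_barrier_le[OF _ assms] by blast
  moreover have "\<forall>x\<in>frontier Omega. w x = 0"
    unfolding w_def using barrier_frontier ab(3) by blast
  moreover have w_eq: "w = (\<lambda>x. 1/2 * xlast x - 1/2 * xlast x powr (2/q)
      * (1 - (norm (xprime x))\<^sup>2) powr ((q - 2)/q))"
    by (simp add: fun_eq_iff w_def barrier_def geo_mean_def roof_def algebra_simps)
  ultimately show ?thesis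
    unfolding Let_def q_def[symmetric] by (intro exI[of _ "1/2"]) (simp only: w_eq, simp)
qed

end
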